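(* For every $\epsilon>0$, $\rho^h\in\mathcal{P}(\mathcal{T}^h)$ with positive entries, and $(K,L)\in\Sigma^h$, the Scharfetter--Gummel flux \[ \mathcal{J}^{h,\rho}_{K|L}=\epsilon\tau_{K|L}\big(\mathfrak b(q_{K|L}/\epsilon)u_K-\mathfrak b(-q_{K|L}/\epsilon)u_L\big),\qquad \mathfrak b(s)=\frac{s}{e^s-1},\ u_K=\frac{\rho^h_K}{|K|}, \] satisfies $\mathcal{J}^{h,\rho}_{K|L}=D_2\overline{\mathcal{R}}^*_{\epsilon,h}\big(\rho^h,-\overline\nabla\mathcal{E}'_{\epsilon,h}(\rho^h)\big)(K,L)$, where $\overline{\mathcal{R}}^*_{\epsilon,h}$ is the `cosh' dual dissipation potential with edge conductivity $\vartheta^{\epsilon,h,\rho}$ defined below. In particular, the Scharfetter--Gummel scheme $\partial_t\rho^h_K+\sum_{L\in\mathcal{T}^h_K}\mathcal{J}^{h,\rho}_{K|L}=0$ possesses the `cosh' gradient flow structure with driving energy $\mathcal{E}_{\epsilon,h}$.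
   Context: $(\mathcal{T}^h,\Sigma^h)$ is a tessellation of a bounded domain: finite family of disjoint cells $K$ with volumes $|K|$, $\Sigma^h$ the set of ordered pairs of cells sharing a face $(K|L)$; $x_K$ barycenter, $\tau_{K|L}=|(K|L)|/|x_L-x_K|$, $\mathcal{T}^h_K=\{L:(K,L)\in\Sigma^h\}$. Given $V_K\in\mathbb{R}$ and symmetric $W_{KL}\in\mathbb{R}$, set $\mathsf{Q}^{h,\rho}_K=V_K+\sum_MW_{KM}\rho^h_M$ and $q_{K|L}=\mathsf{Q}^{h,\rho}_L-\mathsf{Q}^{h,\rho}_K$. Energy $\mathcal{E}_{\epsilon,h}(\rho)=\epsilon\sum_K\phi(u_K)|K|+\sum_KV_K\rho_K+\frac12\sum_{K,L}W_{KL}\rho_K\rho_L$ with $\phi(s)=s\log s-s+1$; its variational derivative is taken as $\mathcal{E}'_{\epsilon,h}(\rho)_K=\epsilon(\log\rho_K-\log\pi^{\epsilon,h,\rho}_K)$, with $\pi^{\epsilon,h,\rho}_K=|K|e^{-\mathsf{Q}^{h,\rho}_K/\epsilon}/Z^{\epsilon,h,\rho}$, $Z^{\epsilon,h,\rho}=\sum_K|K|e^{-\mathsf{Q}^{h,\rho}_K/\epsilon}$; $\overline\nabla f(K,L)=f(L)-f(K)$. Edge conductivity $\vartheta^{\epsilon,h,\rho}_{K|L}=\frac{\tau_{K|L}}{Z^{\epsilon,h,\rho}}\frac{2q_{K|L}/\epsilon}{\exp(\mathsf{Q}^{h,\rho}_L/\epsilon)-\exp(\mathsf{Q}^{h,\rho}_K/\epsilon)}$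 (extended continuously when $q_{K|L}=0$). `Cosh' dual dissipation potential: $\overline{\mathcal{R}}^*_{\epsilon,h}(\rho,\xi)=\frac12\sum_{(K,L)\in\Sigma^h}\Psi^*_\epsilon(\xi_{K|L})\sqrt{\bar u_K\bar u_L}\,\vartheta^{\epsilon,h,\rho}_{K|L}$ with $\bar u_K=\rho_K/\pi^{\epsilon,h,\rho}_K$ and $\Psi^*_\epsilon(s)=4\epsilon^2(\cosh(s/2\epsilon)-1)$; $D_2$ denotes the partial derivative in $\xi_{K|L}$ with $\vartheta^{\epsilon,h,\rho}$ held fixed. *)

theory Defs
  imports Complex_Main
begin

text \<open>Tessellation data: a finite set T of cells, volumes vol K, the set Sig of
  ordered neighbour pairs, transmissivities tau K L, potentials V, interaction W.\<close>

definition Qpot :: "'c set \<Rightarrow> ('c \<Rightarrow> real) \<Rightarrow> ('c \<Rightarrow> 'c \<Rightarrow> real) \<Rightarrow> ('c \<Rightarrow> real) \<Rightarrow> 'c \<Rightarrow> real" where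
  "Qpot T V W \<rho> K = V K + (\<Sum>M\<in>T. W K M * \<rho> M)"

definition qdiff :: "'c set \<Rightarrow> ('c \<Rightarrow> real) \<Rightarrow> ('c \<Rightarrow> 'c \<Rightarrow> real) \<Rightarrow> ('c \<Rightarrow> real) \<Rightarrow> 'c \<Rightarrow> 'c \<Rightarrow> real" where
  "qdiff T V W \<rho> K L = Qpot T V W \<rho> L - Qpot T V W \<rho> K"

definition Zpart :: "real \<Rightarrow> 'c set \<Rightarrow> ('c \<Rightarrow> real) \<Rightarrow> ('c \<Rightarrow> real) \<Rightarrow> ('c \<Rightarrow> 'c \<Rightarrow> real) \<Rightarrow> ('c \<Rightarrow> real) \<Rightarrow> real" where
  "Zpart \<epsilon> T vol V W \<rho> = (\<Sum>K\<in>T. vol K * exp (- Qpot T V W \<rho> K / \<epsilon>))"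

definition piEq :: "real \<Rightarrow> 'c set \<Rightarrow> ('c \<Rightarrow> real) \<Rightarrow> ('c \<Rightarrow> real) \<Rightarrow> ('c \<Rightarrow> 'c \<Rightarrow> real) \<Rightarrow> ('c \<Rightarrow> real) \<Rightarrow> 'c \<Rightarrow> real" where
  "piEq \<epsilon> T vol V W \<rho> K = vol K * exp (- Qpot T V W \<rho> K / \<epsilon>) / Zpart \<epsilon> T vol V W \<rho>"

definition Eprime :: "real \<Rightarrow> 'c set \<Rightarrow> ('c \<Rightarrow> real) \<Rightarrow> ('c \<Rightarrow> real) \<Rightarrow> ('c \<Rightarrow> 'c \<Rightarrow> real) \<Rightarrow> ('c \<Rightarrow> real) \<Rightarrow> 'c \<Rightarrow> real" where
  "Eprime \<epsilon> T vol V W \<rho> K = \<epsilon> * (ln (\<rho> K) - ln (piEq \<epsilon> T vol V W \<rho> K))"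

definition dgrad :: "('c \<Rightarrow> real) \<Rightarrow> 'c \<times> 'c \<Rightarrow> real" where
  "dgrad f e = f (snd e) - f (fst e)"

text \<open>Edge conductivity, extended continuously at q = 0.\<close>
definition theta :: "real \<Rightarrow> 'c set \<Rightarrow> ('c \<Rightarrow> real) \<Rightarrow> ('c \<Rightarrow> 'c \<Rightarrow> real) \<Rightarrow> ('c \<Rightarrow> real) \<Rightarrow> ('c \<Rightarrow> 'c \<Rightarrow> real) \<Rightarrow> ('c \<Rightarrow> real) \<Rightarrow> 'c \<Rightarrow> 'c \<Rightarrow> real" where
  "theta \<epsilon> T vol tau V W \<rho> K L =
     (let QK = Qpot T V W \<rho> K; QL = Qpot T V W \<rho> L; q = QL - QK; Z = Zpart \<epsilon> T vol V W \<rho> in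
      if q = 0 then tau K L / Z * 2 * exp (- QK / \<epsilon>)
      else tau K L / Z * ((2 * q / \<epsilon>) / (exp (QL / \<epsilon>) - exp (QK / \<epsilon>))))"

definition PsiStar :: "real \<Rightarrow> real \<Rightarrow> real" where
  "PsiStar \<epsilon> s = 4 * \<epsilon>\<^sup>2 * (cosh (s / (2 * \<epsilon>)) - 1)"

text \<open>Cosh dual dissipation potential, with conductivity held as a separate
  argument (so that the partial derivative D_2 keeps it fixed).\<close>
definition Rstar :: "real \<Rightarrow> ('c \<times> 'c) set \<Rightarrow> ('c \<Rightarrow> real) \<Rightarrow> ('c \<Rightarrow> 'c \<Rightarrow> real) \<Rightarrow> ('c \<Rightarrow> real) \<Rightarrow> ('c \<times> 'c \<Rightarrow> real) \<Rightarrow> real" where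
  "Rstar \<epsilon> Sig ubar th \<rho> \<xi> =
     1/2 * (\<Sum>(K,L)\<in>Sig. PsiStar \<epsilon> (\<xi> (K,L)) * sqrt (ubar K * ubar L) * th K L)"

definition bern :: "real \<Rightarrow> real" where
  "bern s = (if s = 0 then 1 else s / (exp s - 1))"

definition SGflux :: "real \<Rightarrow> 'c set \<Rightarrow> ('c \<Rightarrow> real) \<Rightarrow> ('c \<Rightarrow> 'c \<Rightarrow> real) \<Rightarrow> ('c \<Rightarrow> real) \<Rightarrow> ('c \<Rightarrow> 'c \<Rightarrow> real) \<Rightarrow> ('c \<Rightarrow> real) \<Rightarrow> 'c \<Rightarrow> 'c \<Rightarrow> real" where
  "SGflux \<epsilon> T vol tau V W \<rho> K L =
     (let q = qdiff T V W \<rho> K L in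
      \<epsilon> * tau K L * (bern (q / \<epsilon>) * (\<rho> K / vol K) - bern (- q / \<epsilon>) * (\<rho> L / vol L)))"

end

theory Submission
  imports Defs
begin

text \<open>The force \<xi> = -\<nabla>E' on the edge (K, L) is \<epsilon> (ln ubar K - ln ubar L), so the partial
  derivative \<epsilon> sinh (\<xi> / 2\<epsilon>) sqrt (ubar K * ubar L) \<vartheta> of the cosh potential collapses to
  \<epsilon> \<vartheta> (ubar K - ubar L) / 2. With s = q / \<epsilon>, the conductivity is
  \<vartheta> = 2 \<tau> exp (-Q K / \<epsilon>) b(s) / Z and ubar = u Z exp (Q / \<epsilon>), so this equals
  \<epsilon> \<tau> b(s) (u K - exp s * u L), the Scharfetter--Gummel flux because b(-s) = exp s * b(s).\<close>

lemma sqrt_mult_sinh_half_ln_diff: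
  fixes x y :: real
  assumes "x > 0" "y > 0"
  shows "sqrt (x * y) * sinh ((ln x - ln y) / 2) = (x - y) / 2"
proof -
  have "exp ((ln x - ln y) / 2) = sqrt x / sqrt y"
    using assms by (simp add: exp_diff diff_divide_distrib ln_sqrt[symmetric])
  moreover have "exp (- ((ln x - ln y) / 2)) = sqrt y / sqrt x"
    using assms by (simp add: exp_diff diff_divide_distrib ln_sqrt[symmetric])
  ultimately have "sinh ((ln x - ln y) / 2) = (sqrt x / sqrt y - sqrt y / sqrt x) / 2"
    by (simp add: sinh_def)
  then show ?thesis
    using assms by (simp add: real_sqrt_mult field_simps)
qed

lemma bern_minus: "bern (- s) = exp s * bern s"
proof (cases "s = 0")
  case False
  have "exp (- s) - 1 = (1 - exp s) / exp s"
    by (simp add: exp_minus field_simps)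
  then show ?thesis
    using False by (simp add: bern_def field_simps)
qed (simp add: bern_def)

lemma PsiStar_has_real_derivative:
  assumes "\<epsilon> \<noteq> 0"
  shows "(PsiStar \<epsilon> has_real_derivative 2 * \<epsilon> * sinh (x / (2 * \<epsilon>))) (at x)"
proof -
  have "((\<lambda>s. 4 * \<epsilon>\<^sup>2 * (cosh (s / (2 * \<epsilon>)) - 1)) has_real_derivative
        4 * \<epsilon>\<^sup>2 * (sinh (x / (2 * \<epsilon>)) * (1 / (2 * \<epsilon>)) - 0)) (at x)"
    using assms by (auto intro!: derivative_eq_intros)
  moreover have "4 * \<epsilon>\<^sup>2 * (sinh (x / (2 * \<epsilon>)) * (1 / (2 * \<epsilon>)) - 0) = 2 * \<epsilon> * sinh (x / (2 * \<epsilon>))"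
    using assms by (simp add: power2_eq_square)
  ultimately show ?thesis
    unfolding PsiStar_def[abs_def] by simp
qed

lemma Rstar_fun_upd_has_real_derivative:
  assumes "finite Sig" "(K, L) \<in> Sig" "\<epsilon> \<noteq> 0"
  shows "((\<lambda>s. Rstar \<epsilon> Sig ubar th \<rho> (\<xi>((K, L) := s))) has_real_derivative
           \<epsilon> * sinh (x / (2 * \<epsilon>)) * sqrt (ubar K * ubar L) * th K L) (at x)"
proof -
  define c where "c = sqrt (ubar K * ubar L) * th K L"
  define rest where
    "rest = (\<Sum>(M, N)\<in>Sig - {(K, L)}. PsiStar \<epsilon> (\<xi> (M, N)) * sqrt (ubar M * ubar N) * th M N)"
  have "Rstar \<epsilon> Sig ubar th \<rho> (\<xi>((K, L) := s)) = 1/2 * (PsiStar \<epsilon> s * c) + 1/2 * rest" for s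
  proof -
    have "(\<Sum>(M, N)\<in>Sig - {(K, L)}. PsiStar \<epsilon> ((\<xi>((K, L) := s)) (M, N)) * sqrt (ubar M * ubar N) * th M N)
        = rest"
      unfolding rest_def by (intro sum.cong refl) (auto split: if_splits)
    then show ?thesis
      unfolding Rstar_def sum.remove[OF assms(1,2)] by (simp add: c_def mult.assoc distrib_left)
  qed
  moreover have "((\<lambda>s. 1/2 * (PsiStar \<epsilon> s * c) + 1/2 * rest) has_real_derivative
                   1/2 * (2 * \<epsilon> * sinh (x / (2 * \<epsilon>)) * c) + 0) (at x)"
    by (intro DERIV_add DERIV_const DERIV_cmult DERIV_cmult_right PsiStar_has_real_derivative assms(3))
  ultimately show ?thesis
    by (simp add: c_def mult.assoc)
qed

lemma Zpart_pos:
  assumes "finite T" "\<And>K. K \<in> T \<Longrightarrow> vol K > 0" "T \<noteq> {}"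
  shows "Zpart \<epsilon> T vol V W \<rho> > 0"
  unfolding Zpart_def using assms by (intro sum_pos) auto

lemma piEq_pos:
  assumes "finite T" "\<And>K. K \<in> T \<Longrightarrow> vol K > 0" "K \<in> T"
  shows "piEq \<epsilon> T vol V W \<rho> K > 0"
proof -
  have "Zpart \<epsilon> T vol V W \<rho> > 0"
    using assms by (intro Zpart_pos) auto
  then show ?thesis
    using assms by (simp add: piEq_def)
qed

lemma div_piEq:
  "r / piEq \<epsilon> T vol V W \<rho> K = r / vol K * Zpart \<epsilon> T vol V W \<rho> * exp (Qpot T V W \<rho> K / \<epsilon>)"
  by (simp add: piEq_def exp_minus field_simps)

lemma minus_dgrad_Eprime:
  assumes "\<rho> K > 0" "\<rho> L > 0" "piEq \<epsilon> T vol V W \<rho> K > 0" "piEq \<epsilon> T vol V W \<rho> L > 0"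
  shows "- dgrad (Eprime \<epsilon> T vol V W \<rho>) (K, L)
           = \<epsilon> * (ln (\<rho> K / piEq \<epsilon> T vol V W \<rho> K) - ln (\<rho> L / piEq \<epsilon> T vol V W \<rho> L))"
  using assms by (simp add: dgrad_def Eprime_def ln_div algebra_simps)

lemma theta_eq_bern:
  assumes "\<epsilon> \<noteq> 0"
  shows "theta \<epsilon> T vol tau V W \<rho> K L
           = 2 * tau K L / Zpart \<epsilon> T vol V W \<rho> * exp (- Qpot T V W \<rho> K / \<epsilon>)
               * bern (qdiff T V W \<rho> K L / \<epsilon>)"
proof -
  define QK QL Z where "QK = Qpot T V W \<rho> K" and "QL = Qpot T V W \<rho> L" and "Z = Zpart \<epsilon> T vol V W \<rho>"
  define s where "s = (QL - QK) / \<epsilon>"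
  have theta: "theta \<epsilon> T vol tau V W \<rho> K L
      = (if QL - QK = 0 then tau K L / Z * 2 * exp (- QK / \<epsilon>)
         else tau K L / Z * (2 * s / (exp (QL / \<epsilon>) - exp (QK / \<epsilon>))))"
    by (simp add: theta_def Let_def QK_def QL_def Z_def s_def)
  have bern: "bern (qdiff T V W \<rho> K L / \<epsilon>) = bern s"
    by (simp add: qdiff_def QK_def QL_def s_def)
  have "theta \<epsilon> T vol tau V W \<rho> K L = 2 * tau K L / Z * exp (- QK / \<epsilon>) * bern s"
  proof (cases "QL - QK = 0")
    case True
    then have "s = 0"
      by (simp add: s_def)
    with True show ?thesis
      by (simp add: theta bern_def)
  next
    case False
    then have "s \<noteq> 0" "exp s \<noteq> 1"
      using assms by (simp_all add: s_def)
    have "exp (QL / \<epsilon>) - exp (QK / \<epsilon>) = (exp s - 1) * exp (QK / \<epsilon>)"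
      by (simp add: s_def diff_divide_distrib left_diff_distrib flip: exp_add)
    moreover have "exp (- QK / \<epsilon>) = 1 / exp (QK / \<epsilon>)"
      by (simp add: exp_minus inverse_eq_divide)
    ultimately show ?thesis
      using False \<open>s \<noteq> 0\<close> \<open>exp s \<noteq> 1\<close> by (simp add: theta bern_def ac_simps)
  qed
  then show ?thesis
    unfolding bern QK_def Z_def .
qed

lemma SGflux_eq_theta_mult_diff:
  assumes "\<epsilon> \<noteq> 0" "Zpart \<epsilon> T vol V W \<rho> \<noteq> 0"
  shows "SGflux \<epsilon> T vol tau V W \<rho> K L
           = \<epsilon> / 2 * theta \<epsilon> T vol tau V W \<rho> K L
               * (\<rho> K / piEq \<epsilon> T vol V W \<rho> K - \<rho> L / piEq \<epsilon> T vol V W \<rho> L)"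
proof -
  define QK QL Z where "QK = Qpot T V W \<rho> K" and "QL = Qpot T V W \<rho> L" and "Z = Zpart \<epsilon> T vol V W \<rho>"
  define s where "s = (QL - QK) / \<epsilon>"
  define uK uL where "uK = \<rho> K / vol K" and "uL = \<rho> L / vol L"
  have flux: "SGflux \<epsilon> T vol tau V W \<rho> K L = \<epsilon> * tau K L * (bern s * uK - bern (- s) * uL)"
    by (simp add: SGflux_def qdiff_def Let_def QK_def QL_def s_def uK_def uL_def)
  have "\<epsilon> / 2 * theta \<epsilon> T vol tau V W \<rho> K L
          * (\<rho> K / piEq \<epsilon> T vol V W \<rho> K - \<rho> L / piEq \<epsilon> T vol V W \<rho> L)
      = \<epsilon> / 2 * (2 * tau K L / Z * exp (- QK / \<epsilon>) * bern s)
          * (uK * Z * exp (QK / \<epsilon>) - uL * Z * exp (QL / \<epsilon>))"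
    using assms(1) by (simp add: theta_eq_bern div_piEq qdiff_def QK_def QL_def Z_def s_def uK_def uL_def)
  also have "exp (QL / \<epsilon>) = exp s * exp (QK / \<epsilon>)"
    using assms(1) by (simp add: s_def diff_divide_distrib flip: exp_add)
  also have "\<epsilon> / 2 * (2 * tau K L / Z * exp (- QK / \<epsilon>) * bern s)
          * (uK * Z * exp (QK / \<epsilon>) - uL * Z * (exp s * exp (QK / \<epsilon>)))
      = \<epsilon> * tau K L * bern s * (exp (- QK / \<epsilon>) * exp (QK / \<epsilon>)) * (Z / Z) * (uK - exp s * uL)"
    by (simp add: algebra_simps)
  also have "exp (- QK / \<epsilon>) * exp (QK / \<epsilon>) = 1"
    by (simp flip: exp_add)
  finally show ?thesis
    using assms(2) by (simp add: flux Z_def bern_minus algebra_simps)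
qed

theorem lemma3p6:
  fixes T :: "'c set" and Sig :: "('c \<times> 'c) set"
    and vol :: "'c \<Rightarrow> real" and tau :: "'c \<Rightarrow> 'c \<Rightarrow> real"
    and V :: "'c \<Rightarrow> real" and W :: "'c \<Rightarrow> 'c \<Rightarrow> real"
    and \<rho> :: "'c \<Rightarrow> real" and \<epsilon> :: real and K L :: 'c
  assumes "finite T"
    and "\<And>K. K \<in> T \<Longrightarrow> vol K > 0"
    and "Sig \<subseteq> T \<times> T"
    and "\<And>K L. (K, L) \<in> Sig \<Longrightarrow> K \<noteq> L"
    and "\<And>K L. (K, L) \<in> Sig \<Longrightarrow> (L, K) \<in> Sig"
    and "\<And>K L. W K L = W L K"
    and "\<epsilon> > 0"
    and "\<And>K. K \<in> T \<Longrightarrow> \<rho> K > 0"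
    and "(\<Sum>K\<in>T. \<rho> K) = 1"
    and "(K, L) \<in> Sig"
  shows "let ubar = (\<lambda>M. \<rho> M / piEq \<epsilon> T vol V W \<rho> M);
             th = theta \<epsilon> T vol tau V W \<rho>;
             \<xi> = (\<lambda>e. - dgrad (Eprime \<epsilon> T vol V W \<rho>) e)
         in ((\<lambda>s. Rstar \<epsilon> Sig ubar th \<rho> (\<xi>((K, L) := s)))
               has_real_derivative SGflux \<epsilon> T vol tau V W \<rho> K L) (at (\<xi> (K, L)))"
proof -
  define ubar where "ubar = (\<lambda>M. \<rho> M / piEq \<epsilon> T vol V W \<rho> M)"
  define th where "th = theta \<epsilon> T vol tau V W \<rho>"
  define \<xi> where "\<xi> = (\<lambda>e. - dgrad (Eprime \<epsilon> T vol V W \<rho>) e)"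
  have KL_in_T: "K \<in> T" "L \<in> T"
    using assms(3,10) by auto
  have Z_pos: "Zpart \<epsilon> T vol V W \<rho> > 0"
    using KL_in_T by (intro Zpart_pos assms(1,2)) auto
  have piEq_KL_pos: "piEq \<epsilon> T vol V W \<rho> K > 0" "piEq \<epsilon> T vol V W \<rho> L > 0"
    using KL_in_T by (intro piEq_pos assms(1,2); simp)+
  then have "ubar K > 0" "ubar L > 0"
    using KL_in_T assms(8) by (simp_all add: ubar_def)
  moreover have "\<xi> (K, L) / (2 * \<epsilon>) = (ln (ubar K) - ln (ubar L)) / 2"
    using assms(7,8) KL_in_T piEq_KL_pos by (simp add: \<xi>_def ubar_def minus_dgrad_Eprime)
  ultimately have "sinh (\<xi> (K, L) / (2 * \<epsilon>)) * sqrt (ubar K * ubar L) = (ubar K - ubar L) / 2"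
    by (simp only: mult.commute[of "sinh _"] sqrt_mult_sinh_half_ln_diff)
  then have "\<epsilon> * sinh (\<xi> (K, L) / (2 * \<epsilon>)) * sqrt (ubar K * ubar L) * th K L
      = \<epsilon> / 2 * th K L * (ubar K - ubar L)"
    by (metis (no_types, lifting) mult.commute mult.left_commute times_divide_eq_left times_divide_eq_right)
  also have "\<dots> = SGflux \<epsilon> T vol tau V W \<rho> K L"
    using SGflux_eq_theta_mult_diff[of \<epsilon> T vol V W \<rho> tau K L] assms(7) Z_pos
    by (simp add: ubar_def th_def)
  finally have "((\<lambda>s. Rstar \<epsilon> Sig ubar th \<rho> (\<xi>((K, L) := s)))
                  has_real_derivative SGflux \<epsilon> T vol tau V W \<rho> K L) (at (\<xi> (K, L)))"
    using Rstar_fun_upd_has_real_derivative[of Sig K L \<epsilon> ubar th \<rho> \<xi> "\<xi> (K, L)"]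
      finite_subset[OF assms(3)] assms(1,7,10) by simp
  then show ?thesis
    unfolding Let_def ubar_def th_def \<xi>_def .
qed

end
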